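(* Let $\rho$ be a measurable c.n.d. kernel on $\mathcal{X}$ with $\rho(x,x)=0$ for all $x\in\mathcal{X}$, let $w:\mathcal{X}\to[0,1]$ be a measurable weight function, and let $v:\mathcal{X}\to\mathcal{X}$ be measurable. Then the threshold-weighted kernel score $\mathrm{tw}S_\rho(\cdot,\cdot;v)$ (as a scoring rule on $\mathcal{M}_{\tilde\rho}$, $\tilde\rho(x,x')=\rho(v(x),v(x'))$) is localising with respect to $w$ if and only if $\rho(v(z),v(x))=\rho(v(z'),v(x))$ for all $z,z'\in\{w=0\}$ and all $x\in\mathcal{X}$.
   Context: A kernel $\rho:\mathcal{X}\times\mathcal{X}\to\mathbb{R}$ is symmetric; it is conditionally negative definite (c.n.d.) if $\sum_{i,j}c_ic_j\rho(x_i,x_j)\le0$ for all finite choices $x_i\in\mathcal{X}$, $c_i\in\mathbb{R}$ with $\sum_ic_i=0$. Threshold-weighted kernel score: $\mathrm{tw}S_\rho(P,y;v)=\mathbb{E}_P[\rho(v(X),v(y))]-\tfrac12\mathbb{E}_P[\rho(v(X),v(X'))]-\tfrac12\rho(v(y),v(y))$ with $X,X'\sim P$ independent. $\mathcal{M}_{\tilde\rho}$ is the set of probability measures $P$ on $\mathcal{X}$ with $\mathbb{E}_P[\tilde\rho(X,x_0)]<\infty$ for some $x_0$. Write $\{w>0\}=\{x:w(x)>0\}$, $\{w=0\}=\{x:w(x)=0\}$. A scoring rule $S$ on a class $\mathcal{M}$ is localising with respect to $w$ if for all $P,Q\in\mathcal{M}$, $P(\cdot\cap\{w>0\})=Q(\cdot\cap\{w>0\})$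 implies $S(P,y)=S(Q,y)$ for all $y\in\mathcal{X}$. *)

theory Defs
  imports "HOL-Probability.Probability"
begin

definition cnd_kernel :: "'a measure \<Rightarrow> ('a \<Rightarrow> 'a \<Rightarrow> real) \<Rightarrow> bool" where
  "cnd_kernel M rho \<longleftrightarrow>
     (\<forall>x\<in>space M. \<forall>y\<in>space M. rho x y = rho y x) \<and>
     (\<forall>(n::nat) (x::nat \<Rightarrow> 'a) (c::nat \<Rightarrow> real).
        (\<forall>i<n. x i \<in> space M) \<longrightarrow> (\<Sum>i<n. c i) = 0 \<longrightarrow>
        (\<Sum>i<n. \<Sum>j<n. c i * c j * rho (x i) (x j)) \<le> 0)"

definition M_class :: "'a measure \<Rightarrow> ('a \<Rightarrow> 'a \<Rightarrow> real) \<Rightarrow> 'a measure set" where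
  "M_class M rt = {P. prob_space P \<and> sets P = sets M \<and>
      (\<exists>x0\<in>space M. (\<integral>\<^sup>+ x. ennreal (rt x x0) \<partial>P) < \<infinity>)}"

definition twS :: "('a \<Rightarrow> 'a \<Rightarrow> real) \<Rightarrow> ('a \<Rightarrow> 'a) \<Rightarrow> 'a measure \<Rightarrow> 'a \<Rightarrow> real" where
  "twS rho v P y =
     (\<integral>x. rho (v x) (v y) \<partial>P)
     - (1/2) * (\<integral>z. rho (v (fst z)) (v (snd z)) \<partial>(P \<Otimes>\<^sub>M P))
     - (1/2) * rho (v y) (v y)"

definition localising ::
  "'a measure \<Rightarrow> 'a measure set \<Rightarrow> ('a measure \<Rightarrow> 'a \<Rightarrow> real) \<Rightarrow> ('a \<Rightarrow> real) \<Rightarrow> bool" where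
  "localising M C S w \<longleftrightarrow>
     (\<forall>P\<in>C. \<forall>Q\<in>C.
        (\<forall>A\<in>sets M. emeasure P (A \<inter> {x\<in>space M. w x > 0})
                    = emeasure Q (A \<inter> {x\<in>space M. w x > 0}))
        \<longrightarrow> (\<forall>y\<in>space M. S P y = S Q y))"

end

theory Submission
  imports Defs
begin

text \<open>Necessity: at a point mass \<open>\<delta>\<^sub>z\<close> the score reduces to \<open>\<rho>(v z, v y)\<close>, and two
  point masses on \<open>{w = 0}\<close> agree on \<open>{w > 0}\<close>. Sufficiency: collapse \<open>{w = 0}\<close> to one of
  its points \<open>z\<^sub>0\<close>. Under the kernel condition this map \<open>\<pi>\<close> leaves \<open>\<rho>(v \<cdot>, v \<cdot>)\<close> unchanged,
  so the score of \<open>P\<close> equals that of its image \<open>\<pi>\<^sub>*P\<close>; and \<open>\<pi>\<^sub>*P\<close> only depends on the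
  restriction of \<open>P\<close> to \<open>{w > 0}\<close>, since \<open>P{w = 0} = 1 - P{w > 0}\<close>.\<close>

lemma pair_measure_return:
  assumes "x \<in> space M" "y \<in> space N"
  shows "return M x \<Otimes>\<^sub>M return N y = return (M \<Otimes>\<^sub>M N) (x, y)"
proof (rule pair_measure_eqI)
  show "sigma_finite_measure (return M x)" "sigma_finite_measure (return N y)"
    using prob_space_return[OF assms(1)] prob_space_return[OF assms(2)]
    by (simp_all add: prob_space_imp_sigma_finite)
  show "sets (return M x \<Otimes>\<^sub>M return N y) = sets (return (M \<Otimes>\<^sub>M N) (x, y))"
    by (simp cong: sets_pair_measure_cong)
  fix A B assume "A \<in> sets (return M x)" "B \<in> sets (return N y)"
  then show "emeasure (return M x) A * emeasure (return N y) B
      = emeasure (return (M \<Otimes>\<^sub>M N) (x, y)) (A \<times> B)"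
    by (simp add: indicator_def)
qed

lemma kernel_comp_measurable:
  assumes rho_meas: "(\<lambda>z. rho (fst z) (snd z)) \<in> borel_measurable (M \<Otimes>\<^sub>M M)"
    and v_meas: "v \<in> M \<rightarrow>\<^sub>M M"
  shows "(\<lambda>z. rho (v (fst z)) (v (snd z))) \<in> borel_measurable (M \<Otimes>\<^sub>M M)"
  using measurable_compose[OF measurable_Pair[OF measurable_compose[OF measurable_fst v_meas]
        measurable_compose[OF measurable_snd v_meas]] rho_meas]
  by (simp add: comp_def)

lemma kernel_comp_measurable_section:
  assumes rho_meas: "(\<lambda>z. rho (fst z) (snd z)) \<in> borel_measurable (M \<Otimes>\<^sub>M M)"
    and v_meas: "v \<in> M \<rightarrow>\<^sub>M M" and y: "y \<in> space M"
  shows "(\<lambda>x. rho (v x) (v y)) \<in> borel_measurable M"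
  using measurable_compose[OF measurable_Pair[OF v_meas measurable_const[of "v y"]] rho_meas]
    measurable_space[OF v_meas y]
  by simp

lemma twS_return:
  assumes rho_meas: "(\<lambda>z. rho (fst z) (snd z)) \<in> borel_measurable (M \<Otimes>\<^sub>M M)"
    and rho_diag: "\<forall>x\<in>space M. rho x x = 0"
    and v_meas: "v \<in> M \<rightarrow>\<^sub>M M"
    and z: "z \<in> space M" and y: "y \<in> space M"
  shows "twS rho v (return M z) y = rho (v z) (v y)"
proof -
  have v_space: "v x \<in> space M" if "x \<in> space M" for x
    using measurable_space[OF v_meas that] .
  have "(\<integral>x. rho (v x) (v y) \<partial>return M z) = rho (v z) (v y)"
    by (rule integral_return[OF z kernel_comp_measurable_section[OF rho_meas v_meas y]])
  moreover have "(\<integral>p. rho (v (fst p)) (v (snd p)) \<partial>(return M z \<Otimes>\<^sub>M return M z)) = 0"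
    unfolding pair_measure_return[OF z z] using z rho_diag v_space
    by (subst integral_return[OF _ kernel_comp_measurable[OF rho_meas v_meas]])
      (auto simp: space_pair_measure)
  ultimately show ?thesis
    unfolding twS_def using rho_diag v_space y by simp
qed

lemma return_in_M_class:
  assumes "(\<lambda>x. rt x z) \<in> borel_measurable M" and z: "z \<in> space M"
  shows "return M z \<in> M_class M rt"
proof -
  have "(\<integral>\<^sup>+ x. ennreal (rt x z) \<partial>return M z) = ennreal (rt z z)"
    by (rule nn_integral_return[OF z]) (use assms(1) in measurable)
  then show ?thesis
    unfolding M_class_def using z prob_space_return[OF z]
    by (intro CollectI conjI bexI[of _ z]) simp_all
qed

lemma twS_distr_eq:
  assumes P: "prob_space P" "sets P = sets M"
    and \<pi>: "\<pi> \<in> M \<rightarrow>\<^sub>M M"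
    and rho_meas: "(\<lambda>z. rho (fst z) (snd z)) \<in> borel_measurable (M \<Otimes>\<^sub>M M)"
    and v_meas: "v \<in> M \<rightarrow>\<^sub>M M"
    and y: "y \<in> space M"
    and invariant: "\<And>x x'. x \<in> space M \<Longrightarrow> x' \<in> space M \<Longrightarrow>
        rho (v (\<pi> x)) (v (\<pi> x')) = rho (v x) (v x')"
    and invariant1: "\<And>x. x \<in> space M \<Longrightarrow> rho (v (\<pi> x)) (v y) = rho (v x) (v y)"
  shows "twS rho v (distr P M \<pi>) y = twS rho v P y"
proof -
  interpret P: prob_space P by (rule P(1))
  have space_P: "space P = space M" using P(2) by (rule sets_eq_imp_space_eq)
  have \<pi>_P: "\<pi> \<in> P \<rightarrow>\<^sub>M M" unfolding measurable_cong_sets[OF P(2) refl] by (rule \<pi>)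
  interpret D: prob_space "distr P M \<pi>" by (rule P.prob_space_distr[OF \<pi>_P])
  have "(\<integral>x. rho (v x) (v y) \<partial>distr P M \<pi>) = (\<integral>x. rho (v x) (v y) \<partial>P)"
    unfolding integral_distr[OF \<pi>_P kernel_comp_measurable_section[OF rho_meas v_meas y]]
    using invariant1 space_P by (intro Bochner_Integration.integral_cong) simp_all
  moreover have "distr P M \<pi> \<Otimes>\<^sub>M distr P M \<pi> = distr (P \<Otimes>\<^sub>M P) (M \<Otimes>\<^sub>M M) (\<lambda>(x, y). (\<pi> x, \<pi> y))"
    by (rule pair_measure_distr[OF \<pi>_P \<pi>_P]) (simp add: D.sigma_finite_measure)
  moreover have "(\<lambda>(x, y). (\<pi> x, \<pi> y)) \<in> (P \<Otimes>\<^sub>M P) \<rightarrow>\<^sub>M (M \<Otimes>\<^sub>M M)"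
    using \<pi>_P by measurable
  ultimately show ?thesis
    unfolding twS_def
    using invariant space_P
    by (simp add: integral_distr kernel_comp_measurable[OF rho_meas v_meas])
      (intro Bochner_Integration.integral_cong; auto simp: space_pair_measure)
qed

lemma emeasure_compl_eq:
  assumes P: "prob_space P" "sets P = sets M" and Q: "prob_space Q" "sets Q = sets M"
    and B: "B \<in> sets M" and eq: "emeasure P B = emeasure Q B"
  shows "emeasure P (space M - B) = emeasure Q (space M - B)"
proof -
  interpret P: prob_space P by (rule P(1))
  interpret Q: prob_space Q by (rule Q(1))
  have "emeasure P (space M - B) = 1 - emeasure P B"
    using emeasure_compl[of B P] B P(2) sets_eq_imp_space_eq[OF P(2)] P.emeasure_space_1 by simp
  moreover have "emeasure Q (space M - B) = 1 - emeasure Q B"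
    using emeasure_compl[of B Q] B Q(2) sets_eq_imp_space_eq[OF Q(2)] Q.emeasure_space_1 by simp
  ultimately show ?thesis using eq by simp
qed

lemma distr_collapse_eq:
  assumes P: "prob_space P" "sets P = sets M" and Q: "prob_space Q" "sets Q = sets M"
    and B: "B \<in> sets M" and z0: "z0 \<in> space M"
    and agree: "\<forall>A\<in>sets M. emeasure P (A \<inter> B) = emeasure Q (A \<inter> B)"
  shows "distr P M (\<lambda>x. if x \<in> B then x else z0) = distr Q M (\<lambda>x. if x \<in> B then x else z0)"
    (is "distr P M ?\<pi> = distr Q M ?\<pi>")
proof (rule measure_eqI)
  show "sets (distr P M ?\<pi>) = sets (distr Q M ?\<pi>)" by simp
  fix A assume "A \<in> sets (distr P M ?\<pi>)"
  then have A: "A \<in> sets M" by simp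
  have \<pi>: "?\<pi> \<in> M \<rightarrow>\<^sub>M M"
    using B z0 by (intro measurable_If_set) auto
  have B_space: "B \<subseteq> space M" using sets.sets_into_space[OF B] .
  have preimage: "?\<pi> -` A \<inter> space M = (A \<inter> B) \<union> (if z0 \<in> A then space M - B else {})"
    using sets.sets_into_space[OF A] B_space by (auto split: if_splits)
  have compl: "emeasure P (space M - B) = emeasure Q (space M - B)"
    using agree sets.top[of M] Int_absorb1[OF B_space]
    by (intro emeasure_compl_eq[OF P Q B]) (metis Int_commute)
  have inside: "emeasure P (A \<inter> B) = emeasure Q (A \<inter> B)" using agree A by blast
  have split: "emeasure R ((A \<inter> B) \<union> (space M - B)) = emeasure R (A \<inter> B) + emeasure R (space M - B)"
    if "sets R = sets M" for R :: "'a measure"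
    using A B that by (intro plus_emeasure[symmetric]) auto
  have "emeasure P (?\<pi> -` A \<inter> space M) = emeasure Q (?\<pi> -` A \<inter> space M)"
    unfolding preimage using inside compl split[OF P(2)] split[OF Q(2)] by simp
  then show "emeasure (distr P M ?\<pi>) A = emeasure (distr Q M ?\<pi>) A"
    using emeasure_distr[OF \<pi>[folded measurable_cong_sets[OF P(2) refl]] A]
      emeasure_distr[OF \<pi>[folded measurable_cong_sets[OF Q(2) refl]] A]
      sets_eq_imp_space_eq[OF P(2)] sets_eq_imp_space_eq[OF Q(2)]
    by simp
qed

lemma twS_eq_if_agree_on:
  assumes rho_meas: "(\<lambda>z. rho (fst z) (snd z)) \<in> borel_measurable (M \<Otimes>\<^sub>M M)"
    and rho_sym: "\<forall>x\<in>space M. \<forall>y\<in>space M. rho x y = rho y x"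
    and v_meas: "v \<in> M \<rightarrow>\<^sub>M M"
    and P: "prob_space P" "sets P = sets M" and Q: "prob_space Q" "sets Q = sets M"
    and B: "B \<in> sets M"
    and agree: "\<forall>A\<in>sets M. emeasure P (A \<inter> B) = emeasure Q (A \<inter> B)"
    and const: "\<forall>z\<in>space M - B. \<forall>z'\<in>space M - B. \<forall>x\<in>space M.
        rho (v z) (v x) = rho (v z') (v x)"
    and y: "y \<in> space M"
  shows "twS rho v P y = twS rho v Q y"
proof (cases "space M \<subseteq> B")
  case True
  have "P = Q"
  proof (rule measure_eqI)
    show "sets P = sets Q" using P(2) Q(2) by simp
    fix A assume "A \<in> sets P"
    with P(2) True have "A \<in> sets M" "A \<inter> B = A"
      using sets.sets_into_space[of A M] by auto
    with agree show "emeasure P A = emeasure Q A" by metis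
  qed
  then show ?thesis by simp
next
  case False
  then obtain z0 where z0: "z0 \<in> space M - B" by blast
  define \<pi> where "\<pi> = (\<lambda>x. if x \<in> B then x else z0)"
  have \<pi>: "\<pi> \<in> M \<rightarrow>\<^sub>M M"
    unfolding \<pi>_def using B z0 by (intro measurable_If_set) auto
  have \<pi>_space: "\<pi> x \<in> space M" if "x \<in> space M" for x
    using that z0 by (simp add: \<pi>_def)
  have v_space: "v x \<in> space M" if "x \<in> space M" for x
    using measurable_space[OF v_meas that] .
  have invariant1: "rho (v (\<pi> x)) (v x') = rho (v x) (v x')"
    if "x \<in> space M" "x' \<in> space M" for x x'
  proof (cases "x \<in> B")
    case False
    with const z0 that have "rho (v z0) (v x') = rho (v x) (v x')" by blast
    with False show ?thesis by (simp add: \<pi>_def)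
  qed (simp add: \<pi>_def)
  have invariant: "rho (v (\<pi> x)) (v (\<pi> x')) = rho (v x) (v x')"
    if x: "x \<in> space M" and x': "x' \<in> space M" for x x'
  proof -
    have "rho (v (\<pi> x)) (v (\<pi> x')) = rho (v (\<pi> x')) (v (\<pi> x))"
      using rho_sym v_space[OF \<pi>_space[OF x]] v_space[OF \<pi>_space[OF x']] by blast
    also have "\<dots> = rho (v x') (v (\<pi> x))" by (rule invariant1[OF x' \<pi>_space[OF x]])
    also have "\<dots> = rho (v (\<pi> x)) (v x')"
      using rho_sym v_space[OF \<pi>_space[OF x]] v_space[OF x'] by blast
    also have "\<dots> = rho (v x) (v x')" by (rule invariant1[OF x x'])
    finally show ?thesis .
  qed
  have "twS rho v P y = twS rho v (distr P M \<pi>) y"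
    using twS_distr_eq[OF P \<pi> rho_meas v_meas y] invariant invariant1 y by simp
  also have "\<dots> = twS rho v (distr Q M \<pi>) y"
    unfolding \<pi>_def using z0 by (subst distr_collapse_eq[OF P Q B _ agree]) simp_all
  also have "\<dots> = twS rho v Q y"
    using twS_distr_eq[OF Q \<pi> rho_meas v_meas y] invariant invariant1 y by simp
  finally show ?thesis .
qed

lemma localising_twS_imp_kernel_eq:
  assumes loc: "localising M (M_class M (\<lambda>x x'. rho (v x) (v x'))) (twS rho v) w"
    and rho_meas: "(\<lambda>z. rho (fst z) (snd z)) \<in> borel_measurable (M \<Otimes>\<^sub>M M)"
    and rho_diag: "\<forall>x\<in>space M. rho x x = 0"
    and v_meas: "v \<in> M \<rightarrow>\<^sub>M M"
    and z: "z \<in> space M" "\<not> w z > 0" and z': "z' \<in> space M" "\<not> w z' > 0"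
    and x: "x \<in> space M"
  shows "rho (v z) (v x) = rho (v z') (v x)"
proof -
  have "emeasure (return M z) (A \<inter> {x\<in>space M. w x > 0})
      = emeasure (return M z') (A \<inter> {x\<in>space M. w x > 0})" for A
    using z z' by (cases "A \<inter> {x\<in>space M. w x > 0} \<in> sets M") (auto simp: emeasure_notin_sets)
  moreover have "return M u \<in> M_class M (\<lambda>x x'. rho (v x) (v x'))" if "u \<in> space M" for u
    using return_in_M_class[where rt = "\<lambda>x x'. rho (v x) (v x')", OF
        kernel_comp_measurable_section[OF rho_meas v_meas that] that] .
  ultimately have "twS rho v (return M z) x = twS rho v (return M z') x"
    using loc z z' x unfolding localising_def by blast
  then show ?thesis
    using twS_return[OF rho_meas rho_diag v_meas] z z' x by simp
qed

theorem proposition4: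
  fixes M :: "'a measure" and rho :: "'a \<Rightarrow> 'a \<Rightarrow> real"
    and w :: "'a \<Rightarrow> real" and v :: "'a \<Rightarrow> 'a"
  assumes rho_meas: "(\<lambda>z. rho (fst z) (snd z)) \<in> borel_measurable (M \<Otimes>\<^sub>M M)"
    and rho_cnd: "cnd_kernel M rho"
    and rho_diag: "\<forall>x\<in>space M. rho x x = 0"
    and w_meas: "w \<in> borel_measurable M"
    and w_range: "\<forall>x\<in>space M. 0 \<le> w x \<and> w x \<le> 1"
    and v_meas: "v \<in> M \<rightarrow>\<^sub>M M"
  shows "localising M (M_class M (\<lambda>x x'. rho (v x) (v x'))) (twS rho v) w \<longleftrightarrow>
         (\<forall>z\<in>space M. \<forall>z'\<in>space M. w z = 0 \<longrightarrow> w z' = 0 \<longrightarrow>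
            (\<forall>x\<in>space M. rho (v z) (v x) = rho (v z') (v x)))"
proof
  assume loc: "localising M (M_class M (\<lambda>x x'. rho (v x) (v x'))) (twS rho v) w"
  show "\<forall>z\<in>space M. \<forall>z'\<in>space M. w z = 0 \<longrightarrow> w z' = 0 \<longrightarrow>
      (\<forall>x\<in>space M. rho (v z) (v x) = rho (v z') (v x))"
    by (intro ballI impI localising_twS_imp_kernel_eq[OF loc rho_meas rho_diag v_meas]) simp_all
next
  assume const: "\<forall>z\<in>space M. \<forall>z'\<in>space M. w z = 0 \<longrightarrow> w z' = 0 \<longrightarrow>
      (\<forall>x\<in>space M. rho (v z) (v x) = rho (v z') (v x))"
  define B where "B = {x\<in>space M. w x > 0}"
  have B: "B \<in> sets M" unfolding B_def using w_meas by measurable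
  have "w z = 0" if "z \<in> space M - B" for z
    using that w_range by (force simp: B_def)
  with const have const_B: "\<forall>z\<in>space M - B. \<forall>z'\<in>space M - B. \<forall>x\<in>space M.
      rho (v z) (v x) = rho (v z') (v x)" by blast
  have rho_sym: "\<forall>x\<in>space M. \<forall>y\<in>space M. rho x y = rho y x"
    using rho_cnd unfolding cnd_kernel_def by blast
  show "localising M (M_class M (\<lambda>x x'. rho (v x) (v x'))) (twS rho v) w"
    unfolding localising_def M_class_def B_def[symmetric]
    by (intro ballI impI twS_eq_if_agree_on[OF rho_meas rho_sym v_meas _ _ _ _ B _ const_B]) auto
qed

end
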